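(* Let $(\mathcal{T},\otimes,\mathbf{1})$ be an essentially small tensor triangulated category and $\mathcal{P}$ a radical ideal of $\mathcal{T}$. If $\mathcal{P}$ is a prime thick subcategory of $\mathcal{T}$, then $\mathcal{P}$ is a prime ideal of $\mathcal{T}$.
   Context: An ideal of $\mathcal{T}$ is a thick subcategory $\mathcal{I}$ with $M\otimes N\in\mathcal{I}$ for all $M\in\mathcal{T}$, $N\in\mathcal{I}$. The radical of an ideal $\mathcal{I}$ is $\sqrt{\mathcal{I}}:=\{M\in\mathcal{T}\mid M^{\otimes n}\in\mathcal{I}\text{ for some }n\ge0\}$; $\mathcal{I}$ is radical if $\sqrt{\mathcal{I}}=\mathcal{I}$. An ideal $\mathcal{P}$ is a prime ideal if $\mathcal{P}\neq\mathcal{T}$ and $M\otimes N\in\mathcal{P}$ implies $M\in\mathcal{P}$ or $N\in\mathcal{P}$. A thick subcategory $\mathcal{P}$ is a prime thick subcategory if among all thick subcategories $\mathcal{X}$ of $\mathcal{T}$ with $\mathcal{P}\subsetneq\mathcal{X}$ there is a unique minimal one. *)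

theory Defs
  imports Main
begin

text \<open>
  Objects have type 'o and
  morphisms type 'm (so the category is small).
\<close>

record ('o, 'm) ttcat =
  cdom   :: "'m \<Rightarrow> 'o"
  ccod   :: "'m \<Rightarrow> 'o"
  ccomp  :: "'m \<Rightarrow> 'm \<Rightarrow> 'm"       \<comment> \<open>ccomp g f = g after f\<close>
  cid    :: "'o \<Rightarrow> 'm"
  cadd   :: "'m \<Rightarrow> 'm \<Rightarrow> 'm"
  czm    :: "'o \<Rightarrow> 'o \<Rightarrow> 'm"       \<comment> \<open>zero morphism X \<rightarrow> Y\<close>
  cneg   :: "'m \<Rightarrow> 'm"
  czero  :: "'o"
  csh    :: "'o \<Rightarrow> 'o"
  cshm   :: "'m \<Rightarrow> 'm"
  ctri   :: "'m \<Rightarrow> 'm \<Rightarrow> 'm \<Rightarrow> bool" \<comment> \<open>distinguished triangles X \<rightarrow> Y \<rightarrow> Z \<rightarrow> \<Sigma>X\<close>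
  cten   :: "'o \<Rightarrow> 'o \<Rightarrow> 'o"
  ctenm  :: "'m \<Rightarrow> 'm \<Rightarrow> 'm"
  cunit  :: "'o"
  calpha :: "'o \<Rightarrow> 'o \<Rightarrow> 'o \<Rightarrow> 'm"
  clam   :: "'o \<Rightarrow> 'm"
  crho   :: "'o \<Rightarrow> 'm"
  csym   :: "'o \<Rightarrow> 'o \<Rightarrow> 'm"
  cthl   :: "'o \<Rightarrow> 'o \<Rightarrow> 'm"        \<comment> \<open>cthl N X : \<Sigma>X \<otimes> N \<rightarrow> \<Sigma>(X \<otimes> N)\<close>
  cthr   :: "'o \<Rightarrow> 'o \<Rightarrow> 'm"        \<comment> \<open>cthr N X : N \<otimes> \<Sigma>X \<rightarrow> \<Sigma>(N \<otimes> X)\<close>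

definition hom :: "('o,'m) ttcat \<Rightarrow> 'o \<Rightarrow> 'o \<Rightarrow> 'm set" where
  "hom C X Y = {f. cdom C f = X \<and> ccod C f = Y}"

definition is_iso :: "('o,'m) ttcat \<Rightarrow> 'm \<Rightarrow> bool" where
  "is_iso C f \<longleftrightarrow> (\<exists>g. g \<in> hom C (ccod C f) (cdom C f) \<and>
      ccomp C g f = cid C (cdom C f) \<and> ccomp C f g = cid C (ccod C f))"

definition isomorphic :: "('o,'m) ttcat \<Rightarrow> 'o \<Rightarrow> 'o \<Rightarrow> bool" where
  "isomorphic C X Y \<longleftrightarrow> (\<exists>f \<in> hom C X Y. is_iso C f)"

definition biproduct :: "('o,'m) ttcat \<Rightarrow> 'o \<Rightarrow> 'o \<Rightarrow> 'o \<Rightarrow> bool" where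
  "biproduct C X Y Z \<longleftrightarrow> (\<exists>i1 i2 p1 p2.
     i1 \<in> hom C X Z \<and> i2 \<in> hom C Y Z \<and> p1 \<in> hom C Z X \<and> p2 \<in> hom C Z Y \<and>
     ccomp C p1 i1 = cid C X \<and> ccomp C p2 i2 = cid C Y \<and>
     ccomp C p1 i2 = czm C Y X \<and> ccomp C p2 i1 = czm C X Y \<and>
     cadd C (ccomp C i1 p1) (ccomp C i2 p2) = cid C Z)"

definition is_tri :: "('o,'m) ttcat \<Rightarrow> 'm \<Rightarrow> 'm \<Rightarrow> 'm \<Rightarrow> bool" where
  "is_tri C f g h \<longleftrightarrow> (\<exists>X Y Z. f \<in> hom C X Y \<and> g \<in> hom C Y Z \<and> h \<in> hom C Z (csh C X))"

definition tri_mor :: "('o,'m) ttcat \<Rightarrow> 'm \<Rightarrow> 'm \<Rightarrow> 'm \<Rightarrow> 'm \<Rightarrow> 'm \<Rightarrow> 'm \<Rightarrow> 'm \<Rightarrow> 'm \<Rightarrow> 'm \<Rightarrow> bool" where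
  "tri_mor C f g h f' g' h' a b c \<longleftrightarrow>
     a \<in> hom C (cdom C f) (cdom C f') \<and> b \<in> hom C (ccod C f) (ccod C f') \<and>
     c \<in> hom C (ccod C g) (ccod C g') \<and>
     ccomp C b f = ccomp C f' a \<and> ccomp C c g = ccomp C g' b \<and>
     ccomp C (cshm C a) h = ccomp C h' c"

locale tt_category =
  fixes C :: "('o,'m) ttcat"
  assumes
    comp_hom: "\<And>f g X Y Z. f \<in> hom C X Y \<Longrightarrow> g \<in> hom C Y Z \<Longrightarrow> ccomp C g f \<in> hom C X Z"
  and id_hom: "\<And>X. cid C X \<in> hom C X X"
  and id_right: "\<And>f X Y. f \<in> hom C X Y \<Longrightarrow> ccomp C f (cid C X) = f"
  and id_left: "\<And>f X Y. f \<in> hom C X Y \<Longrightarrow> ccomp C (cid C Y) f = f"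
  and comp_assoc: "\<And>f g h W X Y Z. f \<in> hom C W X \<Longrightarrow> g \<in> hom C X Y \<Longrightarrow> h \<in> hom C Y Z \<Longrightarrow>
        ccomp C h (ccomp C g f) = ccomp C (ccomp C h g) f"
  and add_hom: "\<And>f g X Y. f \<in> hom C X Y \<Longrightarrow> g \<in> hom C X Y \<Longrightarrow> cadd C f g \<in> hom C X Y"
  and add_comm: "\<And>f g X Y. f \<in> hom C X Y \<Longrightarrow> g \<in> hom C X Y \<Longrightarrow> cadd C f g = cadd C g f"
  and add_assoc: "\<And>f g h X Y. f \<in> hom C X Y \<Longrightarrow> g \<in> hom C X Y \<Longrightarrow> h \<in> hom C X Y \<Longrightarrow>
        cadd C (cadd C f g) h = cadd C f (cadd C g h)"
  and zm_hom: "\<And>X Y. czm C X Y \<in> hom C X Y"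
  and add_zm: "\<And>f X Y. f \<in> hom C X Y \<Longrightarrow> cadd C f (czm C X Y) = f"
  and neg_hom: "\<And>f X Y. f \<in> hom C X Y \<Longrightarrow> cneg C f \<in> hom C X Y"
  and add_neg: "\<And>f X Y. f \<in> hom C X Y \<Longrightarrow> cadd C f (cneg C f) = czm C X Y"
  and comp_add_left: "\<And>f g h X Y Z. f \<in> hom C X Y \<Longrightarrow> g \<in> hom C X Y \<Longrightarrow> h \<in> hom C Y Z \<Longrightarrow>
        ccomp C h (cadd C f g) = cadd C (ccomp C h f) (ccomp C h g)"
  and comp_add_right: "\<And>f g k W X Y. f \<in> hom C X Y \<Longrightarrow> g \<in> hom C X Y \<Longrightarrow> k \<in> hom C W X \<Longrightarrow>
        ccomp C (cadd C f g) k = cadd C (ccomp C f k) (ccomp C g k)"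
  and zero_terminal: "\<And>X. hom C X (czero C) = {czm C X (czero C)}"
  and zero_initial: "\<And>X. hom C (czero C) X = {czm C (czero C) X}"
  and biproducts: "\<And>X Y. \<exists>Z. biproduct C X Y Z"
  and shm_hom: "\<And>f X Y. f \<in> hom C X Y \<Longrightarrow> cshm C f \<in> hom C (csh C X) (csh C Y)"
  and shm_id: "\<And>X. cshm C (cid C X) = cid C (csh C X)"
  and shm_comp: "\<And>f g X Y Z. f \<in> hom C X Y \<Longrightarrow> g \<in> hom C Y Z \<Longrightarrow>
        cshm C (ccomp C g f) = ccomp C (cshm C g) (cshm C f)"
  and shm_add: "\<And>f g X Y. f \<in> hom C X Y \<Longrightarrow> g \<in> hom C X Y \<Longrightarrow>
        cshm C (cadd C f g) = cadd C (cshm C f) (cshm C g)"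
  and shm_fully_faithful: "\<And>X Y. bij_betw (cshm C) (hom C X Y) (hom C (csh C X) (csh C Y))"
  and sh_ess_surj: "\<And>Y. \<exists>X. isomorphic C (csh C X) Y"
  and tri_typed: "\<And>f g h. ctri C f g h \<Longrightarrow> is_tri C f g h"
  and TR1_iso: "\<And>f g h f' g' h' a b c. ctri C f g h \<Longrightarrow> is_tri C f' g' h' \<Longrightarrow>
        tri_mor C f g h f' g' h' a b c \<Longrightarrow> is_iso C a \<Longrightarrow> is_iso C b \<Longrightarrow> is_iso C c \<Longrightarrow>
        ctri C f' g' h'"
  and TR1_id: "\<And>X. ctri C (cid C X) (czm C X (czero C)) (czm C (czero C) (csh C X))"
  and TR1_ext: "\<And>f X Y. f \<in> hom C X Y \<Longrightarrow> \<exists>g h. ctri C f g h"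
  and TR2_rot: "\<And>f g h. ctri C f g h \<Longrightarrow> ctri C g h (cneg C (cshm C f))"
  and TR2_unrot: "\<And>f g h X Y Z. f \<in> hom C X Y \<Longrightarrow> g \<in> hom C Y Z \<Longrightarrow> h \<in> hom C Z (csh C X) \<Longrightarrow>
        ctri C g h (cneg C (cshm C f)) \<Longrightarrow> ctri C f g h"
  and TR3: "\<And>f g h f' g' h' a b. ctri C f g h \<Longrightarrow> ctri C f' g' h' \<Longrightarrow>
        a \<in> hom C (cdom C f) (cdom C f') \<Longrightarrow> b \<in> hom C (ccod C f) (ccod C f') \<Longrightarrow>
        ccomp C b f = ccomp C f' a \<Longrightarrow> \<exists>c. tri_mor C f g h f' g' h' a b c"
  and TR4: "\<And>f g a1 b1 a2 b2 a3 b3 X Y Z. f \<in> hom C X Y \<Longrightarrow> g \<in> hom C Y Z \<Longrightarrow>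
        ctri C f a1 b1 \<Longrightarrow> ctri C g a2 b2 \<Longrightarrow> ctri C (ccomp C g f) a3 b3 \<Longrightarrow>
        \<exists>u v. u \<in> hom C (ccod C a1) (ccod C a3) \<and> v \<in> hom C (ccod C a3) (ccod C a2) \<and>
          ctri C u v (ccomp C (cshm C a1) b2) \<and>
          ccomp C u a1 = ccomp C a3 g \<and> ccomp C b3 u = b1 \<and>
          ccomp C v a3 = a2 \<and> ccomp C b2 v = ccomp C (cshm C f) b3"
  and tenm_hom: "\<And>f g X Y X' Y'. f \<in> hom C X Y \<Longrightarrow> g \<in> hom C X' Y' \<Longrightarrow>
        ctenm C f g \<in> hom C (cten C X X') (cten C Y Y')"
  and tenm_id: "\<And>X Y. ctenm C (cid C X) (cid C Y) = cid C (cten C X Y)"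
  and tenm_comp: "\<And>f g f' g' X Y Z X' Y' Z'. f \<in> hom C X Y \<Longrightarrow> g \<in> hom C Y Z \<Longrightarrow>
        f' \<in> hom C X' Y' \<Longrightarrow> g' \<in> hom C Y' Z' \<Longrightarrow>
        ctenm C (ccomp C g f) (ccomp C g' f') = ccomp C (ctenm C g g') (ctenm C f f')"
  and tenm_add_left: "\<And>f g h X Y X' Y'. f \<in> hom C X Y \<Longrightarrow> g \<in> hom C X Y \<Longrightarrow> h \<in> hom C X' Y' \<Longrightarrow>
        ctenm C (cadd C f g) h = cadd C (ctenm C f h) (ctenm C g h)"
  and tenm_add_right: "\<And>f g h X Y X' Y'. f \<in> hom C X Y \<Longrightarrow> g \<in> hom C X Y \<Longrightarrow> h \<in> hom C X' Y' \<Longrightarrow>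
        ctenm C h (cadd C f g) = cadd C (ctenm C h f) (ctenm C h g)"
  and alpha_hom: "\<And>X Y Z. calpha C X Y Z \<in> hom C (cten C (cten C X Y) Z) (cten C X (cten C Y Z))"
  and alpha_iso: "\<And>X Y Z. is_iso C (calpha C X Y Z)"
  and alpha_nat: "\<And>f g h X Y Z X' Y' Z'. f \<in> hom C X X' \<Longrightarrow> g \<in> hom C Y Y' \<Longrightarrow> h \<in> hom C Z Z' \<Longrightarrow>
        ccomp C (calpha C X' Y' Z') (ctenm C (ctenm C f g) h) =
        ccomp C (ctenm C f (ctenm C g h)) (calpha C X Y Z)"
  and lam_hom: "\<And>X. clam C X \<in> hom C (cten C (cunit C) X) X"
  and lam_iso: "\<And>X. is_iso C (clam C X)"
  and lam_nat: "\<And>f X Y. f \<in> hom C X Y \<Longrightarrow>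
        ccomp C (clam C Y) (ctenm C (cid C (cunit C)) f) = ccomp C f (clam C X)"
  and rho_hom: "\<And>X. crho C X \<in> hom C (cten C X (cunit C)) X"
  and rho_iso: "\<And>X. is_iso C (crho C X)"
  and rho_nat: "\<And>f X Y. f \<in> hom C X Y \<Longrightarrow>
        ccomp C (crho C Y) (ctenm C f (cid C (cunit C))) = ccomp C f (crho C X)"
  and sym_hom: "\<And>X Y. csym C X Y \<in> hom C (cten C X Y) (cten C Y X)"
  and sym_inv: "\<And>X Y. ccomp C (csym C Y X) (csym C X Y) = cid C (cten C X Y)"
  and sym_nat: "\<And>f g X Y X' Y'. f \<in> hom C X X' \<Longrightarrow> g \<in> hom C Y Y' \<Longrightarrow>
        ccomp C (csym C X' Y') (ctenm C f g) = ccomp C (ctenm C g f) (csym C X Y)"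
  and pentagon: "\<And>W X Y Z.
        ccomp C (calpha C W X (cten C Y Z)) (calpha C (cten C W X) Y Z) =
        ccomp C (ctenm C (cid C W) (calpha C X Y Z))
          (ccomp C (calpha C W (cten C X Y) Z) (ctenm C (calpha C W X Y) (cid C Z)))"
  and triangle: "\<And>X Y.
        ccomp C (ctenm C (cid C X) (clam C Y)) (calpha C X (cunit C) Y) =
        ctenm C (crho C X) (cid C Y)"
  and hexagon: "\<And>X Y Z.
        ccomp C (calpha C Y Z X) (ccomp C (csym C X (cten C Y Z)) (calpha C X Y Z)) =
        ccomp C (ctenm C (cid C Y) (csym C X Z))
          (ccomp C (calpha C Y X Z) (ctenm C (csym C X Y) (cid C Z)))"
  and thl_hom: "\<And>N X. cthl C N X \<in> hom C (cten C (csh C X) N) (csh C (cten C X N))"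
  and thl_iso: "\<And>N X. is_iso C (cthl C N X)"
  and thl_nat: "\<And>N f X Y. f \<in> hom C X Y \<Longrightarrow>
        ccomp C (cthl C N Y) (ctenm C (cshm C f) (cid C N)) =
        ccomp C (cshm C (ctenm C f (cid C N))) (cthl C N X)"
  and ten_exact_left: "\<And>N f g h X Y. f \<in> hom C X Y \<Longrightarrow> ctri C f g h \<Longrightarrow>
        ctri C (ctenm C f (cid C N)) (ctenm C g (cid C N))
               (ccomp C (cthl C N X) (ctenm C h (cid C N)))"
  and thr_hom: "\<And>N X. cthr C N X \<in> hom C (cten C N (csh C X)) (csh C (cten C N X))"
  and thr_iso: "\<And>N X. is_iso C (cthr C N X)"
  and thr_nat: "\<And>N f X Y. f \<in> hom C X Y \<Longrightarrow>
        ccomp C (cthr C N Y) (ctenm C (cid C N) (cshm C f)) =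
        ccomp C (cshm C (ctenm C (cid C N) f)) (cthr C N X)"
  and ten_exact_right: "\<And>N f g h X Y. f \<in> hom C X Y \<Longrightarrow> ctri C f g h \<Longrightarrow>
        ctri C (ctenm C (cid C N) f) (ctenm C (cid C N) g)
               (ccomp C (cthr C N X) (ctenm C (cid C N) h))"

text \<open>Thick subcategories (full, replete, triangulated, closed under direct summands),
  identified with their (replete) classes of objects.\<close>
definition thick :: "('o,'m) ttcat \<Rightarrow> 'o set \<Rightarrow> bool" where
  "thick C S \<longleftrightarrow>
     czero C \<in> S \<and>
     (\<forall>X Y. X \<in> S \<and> isomorphic C X Y \<longrightarrow> Y \<in> S) \<and>
     (\<forall>X. csh C X \<in> S \<longleftrightarrow> X \<in> S) \<and>
     (\<forall>f g h. ctri C f g h \<longrightarrow>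
        (cdom C f \<in> S \<and> ccod C f \<in> S \<longrightarrow> ccod C g \<in> S) \<and>
        (cdom C f \<in> S \<and> ccod C g \<in> S \<longrightarrow> ccod C f \<in> S) \<and>
        (ccod C f \<in> S \<and> ccod C g \<in> S \<longrightarrow> cdom C f \<in> S)) \<and>
     (\<forall>X Y Z. biproduct C X Y Z \<and> Z \<in> S \<longrightarrow> X \<in> S)"

definition tt_ideal :: "('o,'m) ttcat \<Rightarrow> 'o set \<Rightarrow> bool" where
  "tt_ideal C I \<longleftrightarrow> thick C I \<and> (\<forall>M N. N \<in> I \<longrightarrow> cten C M N \<in> I)"

primrec tpow :: "('o,'m) ttcat \<Rightarrow> 'o \<Rightarrow> nat \<Rightarrow> 'o" where
  "tpow C M 0 = cunit C"
| "tpow C M (Suc n) = cten C M (tpow C M n)"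

definition tt_radical :: "('o,'m) ttcat \<Rightarrow> 'o set \<Rightarrow> 'o set" where
  "tt_radical C I = {M. \<exists>n. tpow C M n \<in> I}"

definition is_radical :: "('o,'m) ttcat \<Rightarrow> 'o set \<Rightarrow> bool" where
  "is_radical C I \<longleftrightarrow> tt_radical C I = I"

definition prime_ideal :: "('o,'m) ttcat \<Rightarrow> 'o set \<Rightarrow> bool" where
  "prime_ideal C P \<longleftrightarrow> tt_ideal C P \<and> P \<noteq> UNIV \<and>
     (\<forall>M N. cten C M N \<in> P \<longrightarrow> M \<in> P \<or> N \<in> P)"

text \<open>Prime thick subcategory: among thick subcategories strictly containing P there
  is a smallest one (read "unique minimal" as "minimum").\<close>
definition prime_thick :: "('o,'m) ttcat \<Rightarrow> 'o set \<Rightarrow> bool" where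
  "prime_thick C P \<longleftrightarrow> thick C P \<and>
     (\<exists>Q. thick C Q \<and> P \<subset> Q \<and> (\<forall>X. thick C X \<and> P \<subset> X \<longrightarrow> Q \<subseteq> X))"

end

theory Submission
  imports Defs
begin

text \<open>
  For every object A the class of X with A \<otimes> X \<in> P is thick (the tensor product is exact)
  and contains P (P is an ideal).  If M \<otimes> N \<in> P with N \<notin> P, this class strictly contains P,
  hence contains the smallest thick subcategory Q above P.  Choosing q \<in> Q - P we get
  M \<otimes> q \<in> P, so q \<otimes> M \<in> P by symmetry; if also M \<notin> P, the same argument gives
  q \<otimes> q \<in> P, and radicality forces q \<in> P, a contradiction.
\<close>

lemma thick_zero: "thick C S \<Longrightarrow> czero C \<in> S"
  unfolding thick_def by blast

lemma thick_isomorphic: "thick C S \<Longrightarrow> X \<in> S \<Longrightarrow> isomorphic C X Y \<Longrightarrow> Y \<in> S"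
  unfolding thick_def by blast

lemma thick_shift_iff: "thick C S \<Longrightarrow> csh C X \<in> S \<longleftrightarrow> X \<in> S"
  unfolding thick_def by blast

lemma thick_summand: "thick C S \<Longrightarrow> biproduct C X Y Z \<Longrightarrow> Z \<in> S \<Longrightarrow> X \<in> S"
  unfolding thick_def by blast

lemma thick_two_of_three:
  assumes "thick C S" and "ctri C f g h"
  shows "cdom C f \<in> S \<Longrightarrow> ccod C f \<in> S \<Longrightarrow> ccod C g \<in> S"
    and "cdom C f \<in> S \<Longrightarrow> ccod C g \<in> S \<Longrightarrow> ccod C f \<in> S"
    and "ccod C f \<in> S \<Longrightarrow> ccod C g \<in> S \<Longrightarrow> cdom C f \<in> S"
  using assms unfolding thick_def by blast+

lemma thickI:
  assumes "czero C \<in> S"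
    and "\<And>X Y. X \<in> S \<Longrightarrow> isomorphic C X Y \<Longrightarrow> Y \<in> S"
    and "\<And>X. csh C X \<in> S \<longleftrightarrow> X \<in> S"
    and "\<And>f g h. ctri C f g h \<Longrightarrow> cdom C f \<in> S \<Longrightarrow> ccod C f \<in> S \<Longrightarrow> ccod C g \<in> S"
    and "\<And>f g h. ctri C f g h \<Longrightarrow> cdom C f \<in> S \<Longrightarrow> ccod C g \<in> S \<Longrightarrow> ccod C f \<in> S"
    and "\<And>f g h. ctri C f g h \<Longrightarrow> ccod C f \<in> S \<Longrightarrow> ccod C g \<in> S \<Longrightarrow> cdom C f \<in> S"
    and "\<And>X Y Z. biproduct C X Y Z \<Longrightarrow> Z \<in> S \<Longrightarrow> X \<in> S"
  shows "thick C S"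
  unfolding thick_def using assms by blast

lemma isomorphicI:
  assumes "f \<in> hom C X Y" and "g \<in> hom C Y X"
    and "ccomp C g f = cid C X" and "ccomp C f g = cid C Y"
  shows "isomorphic C X Y"
  using assms unfolding isomorphic_def is_iso_def hom_def by auto

lemma isomorphicE:
  assumes "isomorphic C X Y"
  obtains f g where "f \<in> hom C X Y" and "g \<in> hom C Y X"
    and "ccomp C g f = cid C X" and "ccomp C f g = cid C Y"
  using assms unfolding isomorphic_def is_iso_def hom_def by auto

lemma isomorphic_sym: "isomorphic C X Y \<Longrightarrow> isomorphic C Y X"
  by (metis isomorphicE isomorphicI)

lemma isomorphic_of_iso: "f \<in> hom C X Y \<Longrightarrow> is_iso C f \<Longrightarrow> isomorphic C X Y"
  unfolding isomorphic_def by blast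

context tt_category
begin

lemma add_idem_eq_zm:
  assumes f: "f \<in> hom C X Y" and idem: "cadd C f f = f"
  shows "f = czm C X Y"
proof -
  have "czm C X Y = cadd C (cadd C f f) (cneg C f)"
    using add_neg[OF f] idem by simp
  also have "\<dots> = cadd C f (cadd C f (cneg C f))"
    using add_assoc[OF f f neg_hom[OF f]] .
  also have "\<dots> = f"
    using add_neg[OF f] add_zm[OF f] by simp
  finally show ?thesis by simp
qed

abbreviation tensor_left :: "'o \<Rightarrow> 'm \<Rightarrow> 'm" where
  "tensor_left A f \<equiv> ctenm C (cid C A) f"

lemma tensor_left_hom: "f \<in> hom C X Y \<Longrightarrow> tensor_left A f \<in> hom C (cten C A X) (cten C A Y)"
  by (rule tenm_hom[OF id_hom])

lemma tensor_left_comp: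
  assumes "f \<in> hom C X Y" and "g \<in> hom C Y Z"
  shows "tensor_left A (ccomp C g f) = ccomp C (tensor_left A g) (tensor_left A f)"
  using tenm_comp[OF id_hom id_hom assms] id_left[OF id_hom] by simp

lemma tensor_left_comp_id:
  assumes "f \<in> hom C X Y" and "g \<in> hom C Y X" and "ccomp C g f = cid C X"
  shows "ccomp C (tensor_left A g) (tensor_left A f) = cid C (cten C A X)"
  using tensor_left_comp[OF assms(1,2)] assms(3) tenm_id by simp

lemma tensor_left_zm: "tensor_left A (czm C X Y) = czm C (cten C A X) (cten C A Y)"
proof (rule add_idem_eq_zm)
  show "tensor_left A (czm C X Y) \<in> hom C (cten C A X) (cten C A Y)"
    by (rule tensor_left_hom[OF zm_hom])
  show "cadd C (tensor_left A (czm C X Y)) (tensor_left A (czm C X Y)) = tensor_left A (czm C X Y)"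
    using tenm_add_right[OF zm_hom zm_hom id_hom] add_zm[OF zm_hom] by metis
qed

lemma isomorphic_tensor_left:
  assumes "isomorphic C X Y"
  shows "isomorphic C (cten C A X) (cten C A Y)"
proof -
  obtain f g where "f \<in> hom C X Y" "g \<in> hom C Y X" "ccomp C g f = cid C X" "ccomp C f g = cid C Y"
    using assms by (rule isomorphicE)
  then show ?thesis
    by (intro isomorphicI[of "tensor_left A f" _ _ _ "tensor_left A g"]
        tensor_left_hom tensor_left_comp_id)
qed

lemma biproduct_tensor_left:
  assumes "biproduct C X Y Z"
  shows "biproduct C (cten C A X) (cten C A Y) (cten C A Z)"
proof -
  from assms obtain i1 i2 p1 p2 where
    i1: "i1 \<in> hom C X Z" and i2: "i2 \<in> hom C Y Z" and
    p1: "p1 \<in> hom C Z X" and p2: "p2 \<in> hom C Z Y" and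
    "ccomp C p1 i1 = cid C X" "ccomp C p2 i2 = cid C Y" and
    p1i2: "ccomp C p1 i2 = czm C Y X" and p2i1: "ccomp C p2 i1 = czm C X Y" and
    sum: "cadd C (ccomp C i1 p1) (ccomp C i2 p2) = cid C Z"
    unfolding biproduct_def by blast
  let ?i1 = "tensor_left A i1" and ?i2 = "tensor_left A i2"
    and ?p1 = "tensor_left A p1" and ?p2 = "tensor_left A p2"
  have "ccomp C ?p1 ?i1 = cid C (cten C A X)" "ccomp C ?p2 ?i2 = cid C (cten C A Y)"
    by (rule tensor_left_comp_id; fact)+
  moreover have "ccomp C ?p1 ?i2 = czm C (cten C A Y) (cten C A X)"
    "ccomp C ?p2 ?i1 = czm C (cten C A X) (cten C A Y)"
    using tensor_left_comp[OF i2 p1] tensor_left_comp[OF i1 p2] p1i2 p2i1 tensor_left_zm by simp_all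
  moreover have "cadd C (ccomp C ?i1 ?p1) (ccomp C ?i2 ?p2) = cid C (cten C A Z)"
  proof -
    have "cadd C (ccomp C ?i1 ?p1) (ccomp C ?i2 ?p2)
          = cadd C (tensor_left A (ccomp C i1 p1)) (tensor_left A (ccomp C i2 p2))"
      using tensor_left_comp[OF p1 i1] tensor_left_comp[OF p2 i2] by simp
    also have "\<dots> = tensor_left A (cadd C (ccomp C i1 p1) (ccomp C i2 p2))"
      using tenm_add_right[OF comp_hom[OF p1 i1] comp_hom[OF p2 i2] id_hom] by simp
    finally show ?thesis
      using sum tenm_id by simp
  qed
  ultimately show ?thesis
    unfolding biproduct_def using i1 i2 p1 p2 tensor_left_hom by blast
qed

lemma comp_zm_right:
  assumes h: "h \<in> hom C Y Z"
  shows "ccomp C h (czm C X Y) = czm C X Z"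
proof (rule add_idem_eq_zm)
  show "ccomp C h (czm C X Y) \<in> hom C X Z"
    by (rule comp_hom[OF zm_hom h])
  show "cadd C (ccomp C h (czm C X Y)) (ccomp C h (czm C X Y)) = ccomp C h (czm C X Y)"
    using comp_add_left[OF zm_hom zm_hom h] add_zm[OF zm_hom] by metis
qed

lemma id_zero_eq_zm: "cid C (czero C) = czm C (czero C) (czero C)"
  using id_hom zero_terminal by blast

lemma isomorphic_tensor_zero: "isomorphic C (cten C A (czero C)) (czero C)"
proof (rule isomorphicI[OF zm_hom zm_hom])
  have "cid C (cten C A (czero C)) = tensor_left A (czm C (czero C) (czero C))"
    using tenm_id id_zero_eq_zm by metis
  then show "ccomp C (czm C (czero C) (cten C A (czero C))) (czm C (cten C A (czero C)) (czero C))
      = cid C (cten C A (czero C))"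
    using comp_zm_right[OF zm_hom] tensor_left_zm by simp
  show "ccomp C (czm C (cten C A (czero C)) (czero C)) (czm C (czero C) (cten C A (czero C)))
      = cid C (czero C)"
    using comp_zm_right[OF zm_hom] id_zero_eq_zm by simp
qed

lemma isomorphic_tensor_shift: "isomorphic C (cten C A (csh C X)) (csh C (cten C A X))"
  by (rule isomorphic_of_iso[OF thr_hom thr_iso])

lemma isomorphic_tensor_swap: "isomorphic C (cten C X Y) (cten C Y X)"
  by (rule isomorphicI[OF sym_hom sym_hom sym_inv sym_inv])

lemma isomorphic_tpow_two: "isomorphic C (tpow C M 2) (cten C M M)"
  using isomorphic_tensor_left[OF isomorphic_of_iso[OF rho_hom rho_iso]]
  by (simp add: numeral_2_eq_2)

lemma thick_tensor_preimage:
  assumes "thick C P"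
  shows "thick C {X. cten C A X \<in> P}"
proof (rule thickI; simp only: mem_Collect_eq)
  show "cten C A (czero C) \<in> P"
    by (rule thick_isomorphic[OF assms thick_zero[OF assms]
          isomorphic_sym[OF isomorphic_tensor_zero]])
next
  fix X
  show "cten C A (csh C X) \<in> P \<longleftrightarrow> cten C A X \<in> P"
    using thick_isomorphic[OF assms] thick_shift_iff[OF assms]
      isomorphic_tensor_shift isomorphic_sym by metis
next
  fix f g h
  assume tri: "ctri C f g h"
  then obtain X Y Z where f: "f \<in> hom C X Y" and g: "g \<in> hom C Y Z"
    using tri_typed unfolding is_tri_def by blast
  have tri_A: "ctri C (tensor_left A f) (tensor_left A g) (ccomp C (cthr C A X) (tensor_left A h))"
    using ten_exact_right[OF f tri] .
  have "cdom C (tensor_left A f) = cten C A (cdom C f)"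
    "ccod C (tensor_left A f) = cten C A (ccod C f)"
    "ccod C (tensor_left A g) = cten C A (ccod C g)"
    using tensor_left_hom[OF f] tensor_left_hom[OF g] f g by (auto simp: hom_def)
  then show "cten C A (cdom C f) \<in> P \<Longrightarrow> cten C A (ccod C f) \<in> P \<Longrightarrow> cten C A (ccod C g) \<in> P"
    and "cten C A (cdom C f) \<in> P \<Longrightarrow> cten C A (ccod C g) \<in> P \<Longrightarrow> cten C A (ccod C f) \<in> P"
    and "cten C A (ccod C f) \<in> P \<Longrightarrow> cten C A (ccod C g) \<in> P \<Longrightarrow> cten C A (cdom C f) \<in> P"
    using thick_two_of_three[OF assms tri_A] by simp_all
next
  fix X Y
  assume "cten C A X \<in> P" and "isomorphic C X Y"
  then show "cten C A Y \<in> P"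
    using thick_isomorphic[OF assms] isomorphic_tensor_left by blast
next
  fix X Y Z
  assume "biproduct C X Y Z" and "cten C A Z \<in> P"
  then show "cten C A X \<in> P"
    using thick_summand[OF assms biproduct_tensor_left] by blast
qed

end

lemma radical_memD: "is_radical C P \<Longrightarrow> tpow C M n \<in> P \<Longrightarrow> M \<in> P"
  unfolding is_radical_def tt_radical_def by blast

theorem proposition4p8:
  fixes C :: "('o, 'm) ttcat" and P :: "'o set"
  assumes "tt_category C"
    and "tt_ideal C P"
    and "is_radical C P"
    and "prime_thick C P"
  shows "prime_ideal C P"
proof -
  interpret tt_category C by fact
  have P_thick: "thick C P" and P_ideal: "\<And>M N. N \<in> P \<Longrightarrow> cten C M N \<in> P"
    using \<open>tt_ideal C P\<close> unfolding tt_ideal_def by blast+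
  obtain Q where "P \<subset> Q" and Q_least: "\<And>X. thick C X \<Longrightarrow> P \<subset> X \<Longrightarrow> Q \<subseteq> X"
    using \<open>prime_thick C P\<close> unfolding prime_thick_def by auto
  have Q_annihilated: "cten C A q \<in> P" if "q \<in> Q" "cten C A B \<in> P" "B \<notin> P" for A B q
  proof -
    have "P \<subset> {X. cten C A X \<in> P}"
      using P_ideal that(2,3) by blast
    then show ?thesis
      using Q_least[OF thick_tensor_preimage[OF P_thick]] \<open>q \<in> Q\<close> by blast
  qed
  have "M \<in> P \<or> N \<in> P" if MN: "cten C M N \<in> P" for M N
  proof (rule ccontr)
    assume "\<not> (M \<in> P \<or> N \<in> P)"
    then have "M \<notin> P" and "N \<notin> P" by simp_all
    obtain q where "q \<in> Q" and "q \<notin> P"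
      using \<open>P \<subset> Q\<close> by blast
    have "cten C M q \<in> P"
      by (rule Q_annihilated[OF \<open>q \<in> Q\<close> MN \<open>N \<notin> P\<close>])
    then have "cten C q M \<in> P"
      by (rule thick_isomorphic[OF P_thick _ isomorphic_tensor_swap])
    then have "cten C q q \<in> P"
      by (rule Q_annihilated[OF \<open>q \<in> Q\<close> _ \<open>M \<notin> P\<close>])
    then have "tpow C q 2 \<in> P"
      by (rule thick_isomorphic[OF P_thick _ isomorphic_sym[OF isomorphic_tpow_two]])
    then have "q \<in> P"
      by (rule radical_memD[OF \<open>is_radical C P\<close>])
    with \<open>q \<notin> P\<close> show False ..
  qed
  moreover have "P \<noteq> UNIV"
    using \<open>P \<subset> Q\<close> by blast
  ultimately show ?thesis
    unfolding prime_ideal_def using \<open>tt_ideal C P\<close> by blast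
qed

end
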